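(* Under the assumptions of the causal risk ratio identification result (binary $D,M(d),Y(d,m)$; $M=M(D)$, $Y=Y(D,M)$, $Y(d)=Y(d,M(d))$; $Y(d,0)=0$ a.s.; $D$ independent of $(M(d),Y(d,1))$ given $X=x$; $P(D=d\mid X=x)>0$, $P(M=1\mid D=d,X=x)>0$ for $d=0,1$; $\mathbb{E}[Y\mid D=0,M=1,X=x]>0$), suppose also stochastic mediator monotonicity $\mathbb{E}[M(1)\mid X=x]\ge\mathbb{E}[M(0)\mid X=x]$. Then the bias factor $$\left\{\frac{P(D=1\mid M=1,X=x)}{P(D=0\mid M=1,X=x)}\right\}\Big/\left\{\frac{P(D=1\mid X=x)}{P(D=0\mid X=x)}\right\}$$ is at least $1$, and hence $$\mathrm{CRR}(x)=\frac{\mathbb{E}[Y(1)\mid X=x]}{\mathbb{E}[Y(0)\mid X=x]}\ \ge\ \frac{\mathbb{E}[Y\mid D=1,M=1,X=x]}{\mathbb{E}[Y\mid D=0,M=1,X=x]}.$$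
   Context: $D$ is civilian race ($1$ = minority), $M$ detainment, $Y$ police use of force, $X$ covariates of a police–civilian encounter; $M(d)$ and $Y(d,m)$ are potential outcomes. Stochastic mediator monotonicity means that, on average given $X=x$, minorities are at least as likely to be detained as they would be were they of majority race. *)

theory Defs
  imports "HOL-Probability.Probability"
begin

text \<open>All quantities are taken under the conditional law given X = x, modelled as the
probability space P. Conditional probabilities P(A | B) = P(A \<inter> B) / P(B).\<close>

definition ev :: "'a measure \<Rightarrow> ('a \<Rightarrow> bool) \<Rightarrow> 'a set" where
  "ev P A = {\<omega> \<in> space P. A \<omega>}"

definition cprob :: "'a measure \<Rightarrow> ('a \<Rightarrow> bool) \<Rightarrow> ('a \<Rightarrow> bool) \<Rightarrow> real" where
  "cprob P A B = measure P (ev P (\<lambda>\<omega>. A \<omega> \<and> B \<omega>)) / measure P (ev P B)"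

end

theory Submission
  imports Defs
begin

text \<open>By conditional ignorability, P(D = d, M = 1) = P(D = d) E[M(d)] and
P(D = d, M = 1, Y = 1) = P(D = d) P(M(d) = 1, Y(d,1) = 1), and because Y(d,0) = 0 the last
factor is E[Y(d)]. Hence the bias factor equals E[M(1)] / E[M(0)], which is at least 1 by
monotonicity, while the observed risk ratio equals CRR \<times> E[M(0)] / E[M(1)] \<le> CRR.\<close>

lemma ev_cong: "(\<And>\<omega>. A \<omega> = B \<omega>) \<Longrightarrow> ev M A = ev M B"
  by (auto simp: ev_def)

lemma sets_ev [measurable]: "Measurable.pred M A \<Longrightarrow> ev M A \<in> sets M"
  by (simp add: ev_def pred_def)

lemma (in finite_measure) measure_ev_split:
  assumes "Measurable.pred M A" "Measurable.pred M B"
  shows "measure M (ev M A)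
       = measure M (ev M (\<lambda>\<omega>. A \<omega> \<and> B \<omega>)) + measure M (ev M (\<lambda>\<omega>. A \<omega> \<and> \<not> B \<omega>))"
proof -
  have "ev M A = ev M (\<lambda>\<omega>. A \<omega> \<and> B \<omega>) \<union> ev M (\<lambda>\<omega>. A \<omega> \<and> \<not> B \<omega>)"
    by (auto simp: ev_def)
  moreover have "ev M (\<lambda>\<omega>. A \<omega> \<and> B \<omega>) \<in> sets M" "ev M (\<lambda>\<omega>. A \<omega> \<and> \<not> B \<omega>) \<in> sets M"
    using assms by measurable
  ultimately show ?thesis
    by (simp add: finite_measure_Union disjoint_iff ev_def)
qed

lemma measure_ev_conj_null:
  assumes "Measurable.pred M A" "Measurable.pred M N" "AE \<omega> in M. \<not> N \<omega>"
  shows "measure M (ev M (\<lambda>\<omega>. A \<omega> \<and> N \<omega>)) = 0"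
proof -
  have "ev M N \<in> null_sets M"
    using assms(2,3) AE_iff_null[of M "\<lambda>\<omega>. \<not> N \<omega>"] by (simp add: ev_def pred_def)
  moreover have "ev M (\<lambda>\<omega>. A \<omega> \<and> N \<omega>) \<in> sets M"
    using assms(1,2) by measurable
  ultimately have "ev M (\<lambda>\<omega>. A \<omega> \<and> N \<omega>) \<in> null_sets M"
    by (rule null_sets_subset) (auto simp: ev_def)
  then show ?thesis
    by (simp add: measure_eq_0_null_sets)
qed

lemma (in finite_measure) measure_ev_indep_marginal:
  assumes "Measurable.pred M E" "Measurable.pred M A" "Measurable.pred M B"
    and indep: "\<And>b. measure M (ev M (\<lambda>\<omega>. E \<omega> \<and> A \<omega> \<and> B \<omega> = b))
                  = measure M (ev M E) * measure M (ev M (\<lambda>\<omega>. A \<omega> \<and> B \<omega> = b))"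
  shows "measure M (ev M (\<lambda>\<omega>. E \<omega> \<and> A \<omega>)) = measure M (ev M E) * measure M (ev M A)"
proof -
  have "measure M (ev M (\<lambda>\<omega>. E \<omega> \<and> A \<omega>))
      = measure M (ev M (\<lambda>\<omega>. E \<omega> \<and> A \<omega> \<and> B \<omega> = True))
        + measure M (ev M (\<lambda>\<omega>. E \<omega> \<and> A \<omega> \<and> B \<omega> = False))"
    using measure_ev_split[of "\<lambda>\<omega>. E \<omega> \<and> A \<omega>" B] assms(1-3) by (simp add: conj_assoc)
  also have "\<dots> = measure M (ev M E) * (measure M (ev M (\<lambda>\<omega>. A \<omega> \<and> B \<omega> = True))
                   + measure M (ev M (\<lambda>\<omega>. A \<omega> \<and> B \<omega> = False)))"
    by (simp only: indep distrib_left)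
  also have "\<dots> = measure M (ev M E) * measure M (ev M A)"
    using measure_ev_split[of A B] assms(2,3) by simp
  finally show ?thesis .
qed

lemma odds_ratio_quotient_ge_one:
  fixes p1 p0 m1 m0 s :: real
  assumes "0 < p1" "0 < p0" "0 < m0" "m0 \<le> m1" "s \<noteq> 0"
  shows "1 \<le> (p1 * m1 / s / (p0 * m0 / s)) / (p1 / p0)"
  using assms by (simp add: field_simps)

lemma rate_ratio_le:
  fixes q1 q0 m1 m0 :: real
  assumes "0 \<le> q1" "0 < q0" "0 < m0" "m0 \<le> m1"
  shows "q1 / m1 / (q0 / m0) \<le> q1 / q0"
proof -
  have "q1 / m1 / (q0 / m0) = q1 / q0 * (m0 / m1)"
    using assms by (simp add: field_simps)
  also have "\<dots> \<le> q1 / q0"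
    using assms by (intro mult_left_le) auto
  finally show ?thesis .
qed

locale mediator_model = prob_space P
  for P :: "'a measure"
  and D :: "'a \<Rightarrow> bool"
  and Mpo :: "bool \<Rightarrow> 'a \<Rightarrow> bool"
  and Ypo :: "bool \<Rightarrow> bool \<Rightarrow> 'a \<Rightarrow> bool"
  and Mobs Yobs :: "'a \<Rightarrow> bool" +
  assumes measurable_D [measurable]: "D \<in> P \<rightarrow>\<^sub>M count_space UNIV"
    and measurable_Mpo [measurable]: "Mpo d \<in> P \<rightarrow>\<^sub>M count_space UNIV"
    and measurable_Ypo [measurable]: "Ypo d m \<in> P \<rightarrow>\<^sub>M count_space UNIV"
    and Mobs_eq: "Mobs \<omega> = Mpo (D \<omega>) \<omega>"
    and Yobs_eq: "Yobs \<omega> = Ypo (D \<omega>) (Mobs \<omega>) \<omega>"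
    and Ypo_no_mediator: "AE \<omega> in P. \<not> Ypo d False \<omega>"
    and ignorability: "measure P (ev P (\<lambda>\<omega>. D \<omega> = d' \<and> Mpo d \<omega> = a \<and> Ypo d True \<omega> = b))
                        = measure P (ev P (\<lambda>\<omega>. D \<omega> = d'))
                          * measure P (ev P (\<lambda>\<omega>. Mpo d \<omega> = a \<and> Ypo d True \<omega> = b))"
begin

abbreviation Pr :: "('a \<Rightarrow> bool) \<Rightarrow> real" where
  "Pr A \<equiv> measure P (ev P A)"

lemma measurable_Mobs [measurable]: "Mobs \<in> P \<rightarrow>\<^sub>M count_space UNIV"
proof -
  have "Mobs = (\<lambda>\<omega>. if D \<omega> then Mpo True \<omega> else Mpo False \<omega>)"
    by (auto simp: fun_eq_iff Mobs_eq)
  then show ?thesis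
    by simp
qed

lemma Pr_D_Mobs: "Pr (\<lambda>\<omega>. D \<omega> = d \<and> Mobs \<omega>) = Pr (\<lambda>\<omega>. D \<omega> = d) * Pr (Mpo d)"
proof -
  have "ev P (\<lambda>\<omega>. D \<omega> = d \<and> Mobs \<omega>) = ev P (\<lambda>\<omega>. D \<omega> = d \<and> Mpo d \<omega>)"
    by (rule ev_cong) (cases d; auto simp: Mobs_eq)
  moreover have "Pr (\<lambda>\<omega>. D \<omega> = d \<and> Mpo d \<omega>) = Pr (\<lambda>\<omega>. D \<omega> = d) * Pr (Mpo d)"
    by (rule measure_ev_indep_marginal[of _ _ "Ypo d True"]) (simp_all add: ignorability[of d d True, simplified])
  ultimately show ?thesis
    by simp
qed

lemma Pr_D_Mobs_Yobs:
  "Pr (\<lambda>\<omega>. Yobs \<omega> \<and> D \<omega> = d \<and> Mobs \<omega>)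
     = Pr (\<lambda>\<omega>. D \<omega> = d) * Pr (\<lambda>\<omega>. Mpo d \<omega> \<and> Ypo d True \<omega>)"
proof -
  have "ev P (\<lambda>\<omega>. Yobs \<omega> \<and> D \<omega> = d \<and> Mobs \<omega>) = ev P (\<lambda>\<omega>. D \<omega> = d \<and> Mpo d \<omega> \<and> Ypo d True \<omega>)"
    by (rule ev_cong) (cases d; auto simp: Mobs_eq Yobs_eq)
  then show ?thesis
    using ignorability[of d d True True] by simp
qed

lemma Pr_Mobs: "Pr Mobs = Pr D * Pr (Mpo True) + Pr (\<lambda>\<omega>. \<not> D \<omega>) * Pr (Mpo False)"
  using measure_ev_split[of Mobs D] Pr_D_Mobs[of True] Pr_D_Mobs[of False]
  by (simp add: conj_commute)

lemma cprob_D_given_Mobs: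
  "cprob P (\<lambda>\<omega>. D \<omega> = d) Mobs = Pr (\<lambda>\<omega>. D \<omega> = d) * Pr (Mpo d) / Pr Mobs"
  by (simp add: cprob_def Pr_D_Mobs)

lemma cprob_Mobs_given_D:
  assumes "Pr (\<lambda>\<omega>. D \<omega> = d) \<noteq> 0"
  shows "cprob P Mobs (\<lambda>\<omega>. D \<omega> = d) = Pr (Mpo d)"
  using assms Pr_D_Mobs[of d] by (simp add: cprob_def conj_commute)

lemma cprob_Yobs_given_D_Mobs:
  assumes "Pr (\<lambda>\<omega>. D \<omega> = d) \<noteq> 0"
  shows "cprob P Yobs (\<lambda>\<omega>. D \<omega> = d \<and> Mobs \<omega>) = Pr (\<lambda>\<omega>. Mpo d \<omega> \<and> Ypo d True \<omega>) / Pr (Mpo d)"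
  using assms by (simp add: cprob_def Pr_D_Mobs Pr_D_Mobs_Yobs)

lemma Pr_Ypo_Mpo: "Pr (\<lambda>\<omega>. Ypo d (Mpo d \<omega>) \<omega>) = Pr (\<lambda>\<omega>. Mpo d \<omega> \<and> Ypo d True \<omega>)"
proof -
  have "(\<lambda>\<omega>. Ypo d (Mpo d \<omega>) \<omega>) = (\<lambda>\<omega>. if Mpo d \<omega> then Ypo d True \<omega> else Ypo d False \<omega>)"
    by (auto simp: fun_eq_iff)
  then have [measurable]: "Measurable.pred P (\<lambda>\<omega>. Ypo d (Mpo d \<omega>) \<omega>)"
    by (simp add: pred_def)
  have "Pr (\<lambda>\<omega>. Ypo d (Mpo d \<omega>) \<omega>)
      = Pr (\<lambda>\<omega>. Ypo d (Mpo d \<omega>) \<omega> \<and> Mpo d \<omega>) + Pr (\<lambda>\<omega>. Ypo d (Mpo d \<omega>) \<omega> \<and> \<not> Mpo d \<omega>)"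
    by (rule measure_ev_split) measurable
  also have "ev P (\<lambda>\<omega>. Ypo d (Mpo d \<omega>) \<omega> \<and> Mpo d \<omega>) = ev P (\<lambda>\<omega>. Mpo d \<omega> \<and> Ypo d True \<omega>)"
    by (rule ev_cong) auto
  also have "ev P (\<lambda>\<omega>. Ypo d (Mpo d \<omega>) \<omega> \<and> \<not> Mpo d \<omega>) = ev P (\<lambda>\<omega>. \<not> Mpo d \<omega> \<and> Ypo d False \<omega>)"
    by (rule ev_cong) auto
  also have "Pr (\<lambda>\<omega>. \<not> Mpo d \<omega> \<and> Ypo d False \<omega>) = 0"
    by (rule measure_ev_conj_null[OF _ _ Ypo_no_mediator]) measurable
  finally show ?thesis
    by simp
qed

end

theorem mainTheorem7:
  fixes P :: "'a measure"
    and D :: "'a \<Rightarrow> bool"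
    and Mpo :: "bool \<Rightarrow> 'a \<Rightarrow> bool"
    and Ypo :: "bool \<Rightarrow> bool \<Rightarrow> 'a \<Rightarrow> bool"
    and Mobs Yobs :: "'a \<Rightarrow> bool"
  assumes prob: "prob_space P"
    and measD: "D \<in> P \<rightarrow>\<^sub>M count_space UNIV"
    and measM: "\<And>d. Mpo d \<in> P \<rightarrow>\<^sub>M count_space UNIV"
    and measY: "\<And>d m. Ypo d m \<in> P \<rightarrow>\<^sub>M count_space UNIV"
    and Mobs_def: "\<And>\<omega>. Mobs \<omega> = Mpo (D \<omega>) \<omega>"
    and Yobs_def: "\<And>\<omega>. Yobs \<omega> = Ypo (D \<omega>) (Mobs \<omega>) \<omega>"
    and Y0: "\<And>d. AE \<omega> in P. \<not> Ypo d False \<omega>"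
    and indep: "\<And>d d' a b. measure P (ev P (\<lambda>\<omega>. D \<omega> = d' \<and> Mpo d \<omega> = a \<and> Ypo d True \<omega> = b))
                   = measure P (ev P (\<lambda>\<omega>. D \<omega> = d'))
                     * measure P (ev P (\<lambda>\<omega>. Mpo d \<omega> = a \<and> Ypo d True \<omega> = b))"
    and posD: "\<And>d. measure P (ev P (\<lambda>\<omega>. D \<omega> = d)) > 0"
    and posM: "\<And>d. cprob P Mobs (\<lambda>\<omega>. D \<omega> = d) > 0"
    and posY: "cprob P Yobs (\<lambda>\<omega>. \<not> D \<omega> \<and> Mobs \<omega>) > 0"
    and mono: "measure P (ev P (Mpo True)) \<ge> measure P (ev P (Mpo False))"
  shows "((cprob P D Mobs / cprob P (\<lambda>\<omega>. \<not> D \<omega>) Mobs)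
           / (measure P (ev P D) / measure P (ev P (\<lambda>\<omega>. \<not> D \<omega>))) \<ge> 1)
         \<and> (measure P (ev P (\<lambda>\<omega>. Ypo True (Mpo True \<omega>) \<omega>))
           / measure P (ev P (\<lambda>\<omega>. Ypo False (Mpo False \<omega>) \<omega>))
         \<ge> cprob P Yobs (\<lambda>\<omega>. D \<omega> \<and> Mobs \<omega>) / cprob P Yobs (\<lambda>\<omega>. \<not> D \<omega> \<and> Mobs \<omega>))"
proof -
  interpret mediator_model P D Mpo Ypo Mobs Yobs
    by (intro mediator_model.intro mediator_model_axioms.intro prob) (fact assms)+
  have p_pos: "0 < Pr D" "0 < Pr (\<lambda>\<omega>. \<not> D \<omega>)"
    using posD[of True] posD[of False] by simp_all
  have m0_pos: "0 < Pr (Mpo False)"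
    using posM[of False] cprob_Mobs_given_D[of False] p_pos by simp
  have Mobs_pos: "0 < Pr Mobs"
    unfolding Pr_Mobs using p_pos m0_pos
    by (intro add_nonneg_pos mult_nonneg_nonneg mult_pos_pos) simp_all
  have Yobs_given_D_Mobs:
    "cprob P Yobs (\<lambda>\<omega>. D \<omega> \<and> Mobs \<omega>) = Pr (\<lambda>\<omega>. Mpo True \<omega> \<and> Ypo True True \<omega>) / Pr (Mpo True)"
    "cprob P Yobs (\<lambda>\<omega>. \<not> D \<omega> \<and> Mobs \<omega>) = Pr (\<lambda>\<omega>. Mpo False \<omega> \<and> Ypo False True \<omega>) / Pr (Mpo False)"
    using cprob_Yobs_given_D_Mobs[of True] cprob_Yobs_given_D_Mobs[of False] p_pos by simp_all
  have q0_pos: "0 < Pr (\<lambda>\<omega>. Mpo False \<omega> \<and> Ypo False True \<omega>)"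
    using posY m0_pos by (simp add: Yobs_given_D_Mobs zero_less_divide_iff)
  have D_given_Mobs: "cprob P D Mobs = Pr D * Pr (Mpo True) / Pr Mobs"
    "cprob P (\<lambda>\<omega>. \<not> D \<omega>) Mobs = Pr (\<lambda>\<omega>. \<not> D \<omega>) * Pr (Mpo False) / Pr Mobs"
    using cprob_D_given_Mobs[of True] cprob_D_given_Mobs[of False] by simp_all
  show ?thesis
    unfolding D_given_Mobs Yobs_given_D_Mobs Pr_Ypo_Mpo
    by (intro conjI odds_ratio_quotient_ge_one[OF p_pos m0_pos mono less_imp_neq[OF Mobs_pos, symmetric]]
        rate_ratio_le[OF measure_nonneg q0_pos m0_pos mono])
qed

end
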